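(* Let $M$ be a modular lattice of finite length and $x,y\in S(M)$. If $y$ covers $x$ in the partially ordered set $S(M)$ (ordered as in $M$), then $x<y\le x^*$ in $M$.
   Context: $M$ is a modular lattice of finite length (every chain finite) with least element $0$ and greatest element $1$. For $a\in M$: $a^*$ is the join of all elements covering $a$ if $a<1$, and $1^*=1$. An interval $[a,b]$ is \emph{atomistic} if every element of it is a join of atoms of $[a,b]$ (elements covering $a$). The \emph{skeleton} $S(M)$ is the set of least elements of the maximal (under inclusion) atomistic intervals of $M$. *)

theory Defs
  imports Main
begin

definition modular_lattice :: "'a::lattice itself \<Rightarrow> bool" where
  "modular_lattice _ \<longleftrightarrow>
     (\<forall>a b c :: 'a. a \<le> c \<longrightarrow> sup a (inf b c) = inf (sup a b) c)"

definition finite_length :: "'a::order itself \<Rightarrow> bool" where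
  "finite_length _ \<longleftrightarrow>
     (\<forall>C :: 'a set. Complete_Partial_Order.chain (\<le>) C \<longrightarrow> finite C)"

definition covers :: "'a::order \<Rightarrow> 'a \<Rightarrow> bool" where
  "covers a b \<longleftrightarrow> a < b \<and> \<not> (\<exists>c. a < c \<and> c < b)"

definition is_lub_in :: "'a::order set \<Rightarrow> 'a set \<Rightarrow> 'a \<Rightarrow> bool" where
  "is_lub_in X S j \<longleftrightarrow> j \<in> X \<and> (\<forall>s\<in>S. s \<le> j) \<and>
     (\<forall>u\<in>X. (\<forall>s\<in>S. s \<le> u) \<longrightarrow> j \<le> u)"

text \<open>Join of an arbitrary subset of the lattice (exists under finite length).\<close>
definition Join :: "'a::order set \<Rightarrow> 'a" where
  "Join S = (THE j. is_lub_in UNIV S j)"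

definition star :: "'a::bounded_lattice \<Rightarrow> 'a" where
  "star a = (if a < top then Join {b. covers a b} else top)"

definition atomistic_interval :: "'a::order \<Rightarrow> 'a \<Rightarrow> bool" where
  "atomistic_interval a b \<longleftrightarrow> a \<le> b \<and>
     (\<forall>c\<in>{a..b}. \<exists>A \<subseteq> {t\<in>{a..b}. covers a t}. is_lub_in {a..b} A c)"

definition maximal_atomistic_interval :: "'a::order \<Rightarrow> 'a \<Rightarrow> bool" where
  "maximal_atomistic_interval a b \<longleftrightarrow> atomistic_interval a b \<and>
     (\<forall>c d. atomistic_interval c d \<and> {a..b} \<subseteq> {c..d} \<longrightarrow> {c..d} = {a..b})"

definition skeleton :: "'a::order itself \<Rightarrow> 'a set" where
  "skeleton _ = {a. \<exists>b. maximal_atomistic_interval a b}"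

definition covers_in :: "'a::order set \<Rightarrow> 'a \<Rightarrow> 'a \<Rightarrow> bool" where
  "covers_in P x y \<longleftrightarrow> x \<in> P \<and> y \<in> P \<and> x < y \<and> \<not> (\<exists>z\<in>P. x < z \<and> z < y)"

end

theory Submission
  imports Defs
begin

text \<open>Let y cover x in the skeleton and let z be a lower cover of y above x, so y \<le> star z.
  Among the s in [x, z] with star z \<le> star s pick a minimal one. No lower cover e of s has
  star s \<le> star e: as x is in the skeleton this would force x \<le> e, contradicting minimality.
  Since [s, star s] is atomistic in a modular lattice of finite length, it is then a maximal
  atomistic interval, so s lies in the skeleton; hence s = x and y \<le> star z \<le> star x.

  For x in the skeleton and m covered by x, star x \<le> star m is impossible, because the maximal
  atomistic interval starting at x would lie inside the atomistic interval [m, star m].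
  If instead e is covered by z, x \<le> z, star z \<le> star e and x is not below e, then m = inf e x
  is covered by x, and every upper cover of x is perspective to an upper cover of m, directly
  or through an atom of [e, star e]; this gives star x \<le> star m.\<close>

lemma modularD:
  assumes "modular_lattice TYPE('a::lattice)" and "a \<le> c"
  shows "sup a (inf b c) = inf (sup a b) (c::'a)"
  using assms unfolding modular_lattice_def by blast

lemma coversD: "covers a b \<Longrightarrow> a < b"
  unfolding covers_def by blast

subsection \<open>Chain conditions\<close>

lemma finite_length_no_injective_chain_seq:
  fixes f :: "nat \<Rightarrow> 'a::order"
  assumes "finite_length TYPE('a)" and "\<And>i j. i \<noteq> j \<Longrightarrow> f i < f j \<or> f j < f i"
  shows False
proof -
  have "Complete_Partial_Order.chain (\<le>) (range f)"
  proof (rule chainI)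
    fix x y assume "x \<in> range f" "y \<in> range f"
    then obtain i j where "x = f i" "y = f j" by blast
    thus "x \<le> y \<or> y \<le> x"
      using assms(2)[of i j] by (cases "i = j") (auto intro: less_imp_le)
  qed
  hence "finite (range f)"
    using assms(1) unfolding finite_length_def by blast
  moreover have "inj f"
    by (rule injI) (metis assms(2) less_irrefl)
  ultimately show False
    using finite_imageD[of f UNIV] by simp
qed

lemma finite_length_ex_minimal:
  assumes "finite_length TYPE('a::order)" and "x \<in> Q"
  shows "\<exists>z\<in>Q. \<forall>y\<in>Q. \<not> y < (z::'a)"
proof -
  have "wf {(y, z::'a). y < z}"
    unfolding wf_iff_no_infinite_down_chain
  proof (intro notI, elim exE)
    fix f :: "nat \<Rightarrow> 'a" assume "\<forall>i. (f (Suc i), f i) \<in> {(y, z). y < z}"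
    hence desc: "\<forall>i. f (Suc i) < f i" by simp
    have dec: "f j < f i" if "i < j" for i j
      using that by (induction i j rule: less_Suc_induct) (use desc in \<open>auto intro: order.strict_trans\<close>)
    show False
      by (rule finite_length_no_injective_chain_seq[OF assms(1), of f])
        (metis dec linorder_neqE_nat)
  qed
  then obtain z where "z \<in> Q" and "\<And>y. (y, z) \<in> {(y, z). y < z} \<Longrightarrow> y \<notin> Q"
    using assms(2) by (rule wfE_min) blast
  thus ?thesis by blast
qed

lemma finite_length_ex_maximal:
  assumes "finite_length TYPE('a::order)" and "x \<in> Q"
  shows "\<exists>z\<in>Q. \<forall>y\<in>Q. \<not> (z::'a) < y"
proof -
  have "wf {(y, z::'a). z < y}"
    unfolding wf_iff_no_infinite_down_chain
  proof (intro notI, elim exE)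
    fix f :: "nat \<Rightarrow> 'a" assume "\<forall>i. (f (Suc i), f i) \<in> {(y, z). z < y}"
    hence inc: "f i < f j" if "i < j" for i j
      using that by (simp add: lift_Suc_mono_less)
    show False
      by (rule finite_length_no_injective_chain_seq[OF assms(1), of f])
        (metis inc linorder_neqE_nat)
  qed
  then obtain z where "z \<in> Q" and "\<And>y. (y, z) \<in> {(y, z). z < y} \<Longrightarrow> y \<notin> Q"
    using assms(2) by (rule wfE_min) blast
  thus ?thesis by blast
qed

lemma ex_covers_le:
  assumes "finite_length TYPE('a::order)" and "a < b"
  shows "\<exists>t. covers a t \<and> t \<le> (b::'a)"
proof -
  obtain t where t: "a < t" "t \<le> b" and min: "\<forall>u. a < u \<and> u \<le> b \<longrightarrow> \<not> u < t"
    using finite_length_ex_minimal[OF assms(1), of b "{t. a < t \<and> t \<le> b}"] assms(2) by auto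
  have "covers a t"
    unfolding covers_def using t min by (meson dual_order.strict_trans1 less_imp_le)
  thus ?thesis using t by blast
qed

lemma ex_ge_covers:
  assumes "finite_length TYPE('a::order)" and "c < b"
  shows "\<exists>e. c \<le> e \<and> covers e (b::'a)"
proof -
  obtain e where e: "c \<le> e" "e < b" and max: "\<forall>u. c \<le> u \<and> u < b \<longrightarrow> \<not> e < u"
    using finite_length_ex_maximal[OF assms(1), of c "{e. c \<le> e \<and> e < b}"] assms(2) by auto
  have "covers e b"
    unfolding covers_def using e max by (meson order.trans less_imp_le)
  thus ?thesis using e by blast
qed

subsection \<open>The operator star\<close>

lemma Join_is_lub:
  assumes fl: "finite_length TYPE('a::bounded_lattice)"
  shows "is_lub_in UNIV S (Join (S::'a set))"
proof -
  obtain u where ub: "\<forall>s\<in>S. s \<le> u" and min: "\<forall>v. (\<forall>s\<in>S. s \<le> v) \<longrightarrow> \<not> v < u"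
    using finite_length_ex_minimal[OF fl, of top "{u. \<forall>s\<in>S. s \<le> u}"] by auto
  have least: "u \<le> v" if "\<forall>s\<in>S. s \<le> v" for v
  proof -
    have "\<not> inf u v < u"
      using min ub that by simp
    thus ?thesis
      by (simp add: less_le_not_le)
  qed
  have "is_lub_in UNIV S u"
    unfolding is_lub_in_def using ub least by blast
  moreover have "j = u" if "is_lub_in UNIV S j" for j
    using that ub least unfolding is_lub_in_def by (blast intro: order_antisym)
  ultimately show ?thesis
    unfolding Join_def by (rule theI)
qed

lemma le_star_if_covers:
  assumes "finite_length TYPE('a::bounded_lattice)" and "covers a p"
  shows "p \<le> star (a::'a)"
proof -
  have "a < top"
    using coversD[OF assms(2)] top_greatest by (rule order.strict_trans2)
  thus ?thesis
    using Join_is_lub[OF assms(1), of "{b. covers a b}"] assms(2)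
    unfolding star_def is_lub_in_def by simp
qed

lemma star_le_if_covers_le:
  assumes "finite_length TYPE('a::bounded_lattice)" and "a < top"
    and "\<And>p. covers a p \<Longrightarrow> p \<le> u"
  shows "star (a::'a) \<le> u"
  using Join_is_lub[OF assms(1), of "{b. covers a b}"] assms(2,3)
  unfolding star_def is_lub_in_def by simp

lemma le_star:
  assumes "finite_length TYPE('a::bounded_lattice)"
  shows "a \<le> star (a::'a)"
proof (cases "a < top")
  case True
  then obtain t where "covers a t"
    using ex_covers_le[OF assms] by blast
  thus ?thesis
    using coversD le_star_if_covers[OF assms] by (blast intro: order.trans less_imp_le)
qed (simp add: star_def)

subsection \<open>Covers in modular lattices\<close>

lemma covers_between:
  assumes "covers c p" and "c \<le> z" and "z \<le> p"
  shows "z = c \<or> z = (p::'a::order)"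
  using assms unfolding covers_def by (metis order_le_imp_less_or_eq)

lemma inf_eq_if_covers_not_le:
  assumes "covers c p" and "c \<le> v" and "\<not> p \<le> v"
  shows "inf v p = (c::'a::lattice)"
proof -
  have "c \<le> inf v p"
    using assms(2) coversD[OF assms(1)] by (simp add: less_imp_le)
  moreover have "inf v p \<noteq> p"
    using assms(3) by (metis inf.cobounded1)
  ultimately show ?thesis
    using covers_between[OF assms(1), of "inf v p"] by simp
qed

lemma covers_sup_if_covers_inf:
  assumes md: "modular_lattice TYPE('a::lattice)" and "covers (inf a b) b"
  shows "covers a (sup a (b::'a))"
proof -
  have "\<not> b \<le> a"
    using coversD[OF assms(2)] by (auto simp: inf.absorb2)
  hence "a < sup a b"
    by (simp add: less_le_not_le)
  moreover have "\<not> (a < z \<and> z < sup a b)" for z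
  proof
    assume z: "a < z \<and> z < sup a b"
    hence "sup a (inf b z) = z"
      using modularD[OF md, of a z b] by (simp add: inf.absorb2 less_imp_le)
    moreover have "inf b z = inf a b \<or> inf b z = b"
      using covers_between[OF assms(2), of "inf b z"] z by (auto intro: le_infI1 less_imp_le)
    ultimately show False
      using z by (metis inf.absorb_iff1 le_sup_iff less_le_not_le sup_inf_absorb)
  qed
  ultimately show ?thesis
    unfolding covers_def by blast
qed

lemma covers_inf_if_covers_sup:
  assumes md: "modular_lattice TYPE('a::lattice)" and "covers a (sup a b)"
  shows "covers (inf a b) (b::'a)"
proof -
  have "inf a b < b"
    using coversD[OF assms(2)] by (metis inf.absorb_iff2 inf_sup_ord(2) nless_le sup.absorb_iff1)
  moreover have "\<not> (inf a b < z \<and> z < b)" for z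
  proof
    assume z: "inf a b < z \<and> z < b"
    hence "inf (sup a z) b = z"
      using modularD[OF md, of z b a] by (simp add: sup.absorb1 less_imp_le sup_commute)
    moreover have "sup a z = a \<or> sup a z = sup a b"
      using covers_between[OF assms(2), of "sup a z"] z by (auto intro: le_supI2 less_imp_le)
    ultimately show False
      using z by (metis inf.absorb2 inf_sup_absorb less_irrefl sup_ge2)
  qed
  ultimately show ?thesis
    unfolding covers_def by blast
qed

lemma covers_sup_if_not_le:
  assumes md: "modular_lattice TYPE('a::lattice)"
    and "c \<le> e" and "covers c p" and "\<not> p \<le> e"
  shows "covers e (sup e (p::'a))"
proof -
  have "covers (inf e p) p"
    using inf_eq_if_covers_not_le[OF assms(3,2,4)] assms(3) by simp
  thus ?thesis
    by (rule covers_sup_if_covers_inf[OF md])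
qed

lemma star_mono:
  assumes fl: "finite_length TYPE('a::bounded_lattice)" and md: "modular_lattice TYPE('a)"
    and "c \<le> e"
  shows "star c \<le> star (e::'a)"
proof (cases "e = top")
  case False
  hence "c < top"
    using \<open>c \<le> e\<close> by (metis top.not_eq_extremum top.extremum_unique)
  thus ?thesis
  proof (rule star_le_if_covers_le[OF fl])
    fix p assume p: "covers c p"
    show "p \<le> star e"
    proof (cases "p \<le> e")
      case True
      thus ?thesis using le_star[OF fl] by (rule order.trans)
    next
      case False
      hence "covers e (sup e p)"
        by (rule covers_sup_if_not_le[OF md \<open>c \<le> e\<close> p])
      hence "sup e p \<le> star e"
        by (rule le_star_if_covers[OF fl])
      thus ?thesis by simp
    qed
  qed
qed (simp add: star_def)

subsection \<open>The interval from a to star a is atomistic\<close>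

lemma le_foldr_sup: "(a::'a::semilattice_sup) \<le> foldr sup rs a"
  by (induction rs) (auto intro: le_supI2)

text \<open>The witness is the perspective image inf c (sup s r) of s.\<close>

lemma ex_atom_le_not_le_perspective:
  assumes md: "modular_lattice TYPE('a::lattice)"
    and r: "covers a r" and s: "covers a s" and "a \<le> w" "w \<le> c" "\<not> r \<le> c"
    and "s \<le> sup c r" "\<not> s \<le> sup w (r::'a)"
  shows "\<exists>t. covers a t \<and> t \<le> c \<and> \<not> t \<le> w"
proof (intro exI conjI)
  define t where "t = inf c (sup s r)"
  have "sup r t = sup s r"
    using modularD[OF md, of r "sup s r" c] assms(7) by (simp add: t_def inf.absorb2 sup_commute)
  hence srt: "sup s r = sup r t" ..
  show "t \<le> c" unfolding t_def by simp
  show "\<not> t \<le> w"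
    using assms(8) srt by (metis le_sup_iff sup.cobounded2 sup_mono order_refl)
  have "\<not> s \<le> r"
    using assms(8) by (meson le_supI2)
  hence "inf r s = a"
    using inf_eq_if_covers_not_le[OF s] coversD[OF r] by (simp add: less_imp_le)
  hence "covers r (sup r t)"
    using covers_sup_if_covers_inf[OF md, of r s] s srt by (simp add: sup_commute)
  hence "covers (inf r t) t"
    by (rule covers_inf_if_covers_sup[OF md])
  moreover have "inf t r = a"
  proof (rule inf_eq_if_covers_not_le[OF r])
    show "a \<le> t"
      using assms(4,5) coversD[OF s] unfolding t_def by (auto intro: le_supI1 less_imp_le)
    show "\<not> r \<le> t"
      using \<open>t \<le> c\<close> assms(6) by auto
  qed
  ultimately show "covers a t"
    by (simp add: inf_commute)
qed

text \<open>This says that the interval [a, foldr sup rs a] is atomistic.\<close>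

lemma ex_atom_le_not_le:
  assumes md: "modular_lattice TYPE('a::lattice)"
  shows "set rs \<subseteq> {r. covers a r} \<Longrightarrow> a \<le> w \<Longrightarrow> w < c \<Longrightarrow> c \<le> foldr sup rs a
     \<Longrightarrow> \<exists>t. covers a t \<and> t \<le> c \<and> \<not> t \<le> (w::'a)"
proof (induction rs arbitrary: w c)
  case Nil
  thus ?case by auto
next
  case (Cons r rs)
  define W where "W = foldr sup rs a"
  have r: "covers a r" and "c \<le> sup r W" and rs: "set rs \<subseteq> {r. covers a r}"
    using Cons.prems unfolding W_def by auto
  have "w \<le> c" using Cons.prems(3) by (rule less_imp_le)
  have step: "\<exists>s. covers a s \<and> s \<le> sup c r \<and> \<not> s \<le> sup w r" if "sup w r < sup c r"
  proof -
    have "sup r (inf W (sup c r)) = sup c r"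
      using modularD[OF md, of r "sup c r" W] \<open>c \<le> sup r W\<close> by (simp add: inf.absorb2)
    hence "\<not> inf (sup c r) W \<le> inf (sup w r) W"
      using that by (metis inf_commute le_inf_iff le_sup_iff less_le_not_le sup_ge2)
    moreover have "inf (sup w r) W \<le> inf (sup c r) W"
      using \<open>w \<le> c\<close> by (simp add: le_infI1 le_supI1)
    ultimately have "inf (sup w r) W < inf (sup c r) W"
      by (simp add: less_le_not_le)
    moreover have "a \<le> inf (sup w r) W"
      using Cons.prems(2) by (simp add: W_def le_supI1 le_foldr_sup)
    moreover have "inf (sup c r) W \<le> W"
      by simp
    ultimately obtain s where "covers a s" "s \<le> inf (sup c r) W" "\<not> s \<le> inf (sup w r) W"
      using Cons.IH[OF rs] unfolding W_def by blast
    thus ?thesis by auto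
  qed
  consider (atom) "r \<le> c" "\<not> r \<le> w" | (below) "r \<le> w" | (apart) "\<not> r \<le> c"
    using \<open>w \<le> c\<close> by (meson order.trans)
  then show ?case
  proof cases
    case atom
    thus ?thesis using r by blast
  next
    case below
    hence "sup w r = w" "sup c r = c"
      using \<open>w \<le> c\<close> by (auto simp: sup.absorb1)
    thus ?thesis
      using step Cons.prems(3) by simp
  next
    case apart
    have "sup w (inf r c) = inf (sup w r) c"
      using modularD[OF md \<open>w \<le> c\<close>, of r] by simp
    moreover have "inf r c = a"
      using inf_eq_if_covers_not_le[OF r _ apart] Cons.prems(2) \<open>w \<le> c\<close> by (simp add: inf_commute)
    ultimately have "c \<le> sup w r \<Longrightarrow> c \<le> w"
      using Cons.prems(2) by (simp add: inf.absorb2 sup.absorb1)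
    hence "\<not> sup c r \<le> sup w r"
      using Cons.prems(3) by (auto simp: less_le_not_le)
    moreover have "sup w r \<le> sup c r"
      using \<open>w \<le> c\<close> by (simp add: le_supI1)
    ultimately obtain s where "covers a s" "s \<le> sup c r" "\<not> s \<le> sup w r"
      using step by (auto simp: less_le_not_le)
    thus ?thesis
      by (rule ex_atom_le_not_le_perspective[OF md r _ Cons.prems(2) \<open>w \<le> c\<close> apart])
  qed
qed

lemma star_le_foldr_sup_atoms:
  assumes fl: "finite_length TYPE('a::bounded_lattice)"
  shows "\<exists>rs. set rs \<subseteq> {r. covers a r} \<and> star (a::'a) \<le> foldr sup rs a"
proof -
  define F where "F = {foldr sup rs a | rs. set rs \<subseteq> {r. covers a r}}"
  have "a \<in> F"
    unfolding F_def by (rule CollectI, rule exI[of _ "[]"]) simp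
  then obtain f where "f \<in> F" and max: "\<forall>g\<in>F. \<not> f < g"
    using finite_length_ex_maximal[OF fl] by blast
  then obtain rs where rs: "set rs \<subseteq> {r. covers a r}" and f: "f = foldr sup rs a"
    unfolding F_def by blast
  have atoms_le: "r \<le> f" if "covers a r" for r
  proof -
    have "sup r f \<in> F"
      unfolding F_def f using rs that by (intro CollectI exI[of _ "r # rs"]) simp
    hence "sup r f = f"
      using max by (auto simp: less_le_not_le)
    thus ?thesis
      by (metis sup.cobounded1)
  qed
  have "star a \<le> f"
  proof (cases "a < top")
    case True thus ?thesis by (rule star_le_if_covers_le[OF fl _ atoms_le])
  next
    case False
    hence "a = top" by (metis top.not_eq_extremum)
    thus ?thesis
      using le_foldr_sup[of a rs] f by (simp add: star_def top.extremum_unique)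
  qed
  thus ?thesis using rs f by blast
qed

lemma ex_atom_le_not_le_star:
  assumes fl: "finite_length TYPE('a::bounded_lattice)" and md: "modular_lattice TYPE('a)"
    and "a \<le> w" "w < c" "c \<le> star (a::'a)"
  shows "\<exists>t. covers a t \<and> t \<le> c \<and> \<not> t \<le> w"
  using star_le_foldr_sup_atoms[OF fl, of a] ex_atom_le_not_le[OF md] assms(3-5)
  by (meson order.trans)

lemma atomistic_interval_star:
  assumes fl: "finite_length TYPE('a::bounded_lattice)" and md: "modular_lattice TYPE('a)"
  shows "atomistic_interval a (star (a::'a))"
  unfolding atomistic_interval_def
proof (intro conjI ballI)
  show "a \<le> star a" by (rule le_star[OF fl])
  fix c assume c: "c \<in> {a..star a}"
  let ?A = "{t. covers a t \<and> t \<le> c}"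
  have "?A \<subseteq> {t \<in> {a..star a}. covers a t}"
    using c by (auto dest: coversD)
  moreover have "is_lub_in {a..star a} ?A c"
    unfolding is_lub_in_def
  proof (intro conjI ballI impI)
    fix u assume u: "u \<in> {a..star a}" and ub: "\<forall>t\<in>?A. t \<le> u"
    show "c \<le> u"
    proof (rule ccontr)
      assume "\<not> c \<le> u"
      hence "inf c u < c" by (simp add: less_le_not_le)
      then obtain t where "covers a t" "t \<le> c" "\<not> t \<le> inf c u"
        using ex_atom_le_not_le_star[OF fl md _ _, of a "inf c u" c] c u by auto
      thus False using ub by auto
    qed
  qed (use c in auto)
  ultimately show "\<exists>A\<subseteq>{t \<in> {a..star a}. covers a t}. is_lub_in {a..star a} A c"
    by blast
qed

lemma le_star_if_atomistic_interval:
  assumes fl: "finite_length TYPE('a::bounded_lattice)" and "atomistic_interval a b"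
  shows "b \<le> star (a::'a)"
proof -
  have "\<exists>A \<subseteq> {t \<in> {a..b}. covers a t}. is_lub_in {a..b} A b"
    using assms(2) unfolding atomistic_interval_def by simp
  then obtain A where A: "A \<subseteq> {t \<in> {a..b}. covers a t}" "is_lub_in {a..b} A b"
    by blast
  have "inf b (star a) \<in> {a..b}"
    using assms(2) le_star[OF fl, of a] unfolding atomistic_interval_def by simp
  moreover have "\<forall>t\<in>A. t \<le> inf b (star a)"
    using A(1) le_star_if_covers[OF fl] by auto
  ultimately have "b \<le> inf b (star a)"
    using A(2) unfolding is_lub_in_def by blast
  thus ?thesis by simp
qed

subsection \<open>The skeleton\<close>

lemma star_not_le_star_if_skeleton:
  assumes fl: "finite_length TYPE('a::bounded_lattice)" and md: "modular_lattice TYPE('a)"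
    and "x \<in> skeleton TYPE('a)" and "m < x"
  shows "\<not> star x \<le> star (m::'a)"
proof
  assume "star x \<le> star m"
  obtain b where b: "maximal_atomistic_interval x b"
    using assms(3) unfolding skeleton_def by blast
  hence "b \<le> star x"
    unfolding maximal_atomistic_interval_def by (blast intro: le_star_if_atomistic_interval[OF fl])
  hence "{x..b} \<subseteq> {m..star m}"
    using \<open>star x \<le> star m\<close> \<open>m < x\<close> by auto
  hence "{m..star m} = {x..b}"
    using b atomistic_interval_star[OF fl md, of m] unfolding maximal_atomistic_interval_def by blast
  moreover have "m \<in> {m..star m}"
    using le_star[OF fl, of m] by simp
  ultimately show False
    using \<open>m < x\<close> by auto
qed

lemma le_star_if_perspective:
  assumes fl: "finite_length TYPE('a::bounded_lattice)" and md: "modular_lattice TYPE('a)"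
    and "covers m x" and "covers x p" and "p \<le> sup x v" and "inf x v = m"
  shows "p \<le> star (m::'a)"
proof -
  define q where "q = inf v p"
  have "x \<le> p" "m \<le> x"
    using coversD assms(3,4) by (auto intro: less_imp_le)
  have "sup x q = p"
    using modularD[OF md \<open>x \<le> p\<close>, of v] assms(5) by (simp add: q_def inf.absorb2)
  moreover have "inf x q = m"
    using assms(6) \<open>x \<le> p\<close> \<open>m \<le> x\<close> unfolding q_def
    by (metis inf.absorb1 inf_left_commute inf_commute order.trans)
  ultimately have "covers m q"
    using covers_inf_if_covers_sup[OF md, of x q] assms(4) by simp
  hence "q \<le> star m"
    by (rule le_star_if_covers[OF fl])
  moreover have "x \<le> star m"
    by (rule le_star_if_covers[OF fl assms(3)])
  ultimately show ?thesis
    using \<open>sup x q = p\<close> by (metis le_sup_iff)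
qed

lemma star_le_star_inf_if_covers:
  assumes fl: "finite_length TYPE('a::bounded_lattice)" and md: "modular_lattice TYPE('a)"
    and ez: "covers e z" and "x \<le> z" and "\<not> x \<le> e" and "star z \<le> star e"
  shows "star x \<le> star (inf e (x::'a))"
proof -
  have "e \<le> z" using coversD[OF ez] by (rule less_imp_le)
  have "sup e x \<le> z"
    using \<open>e \<le> z\<close> assms(4) by simp
  moreover have "sup e x \<noteq> e"
    using assms(5) by (metis sup.cobounded2)
  ultimately have "sup e x = z"
    using covers_between[OF ez sup.cobounded1] by blast
  hence mx: "covers (inf e x) x"
    using covers_inf_if_covers_sup[OF md] ez by simp
  show ?thesis
  proof (cases "x = top")
    case True
    thus ?thesis
      using assms(4,6) \<open>sup e x = z\<close> by (simp add: top.extremum_unique)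
  next
    case False
    show ?thesis
    proof (rule star_le_if_covers_le[OF fl])
      show "x < top" using False by (simp add: top.not_eq_extremum)
      fix p assume xp: "covers x p"
      show "p \<le> star (inf e x)"
      proof (cases "p \<le> z")
        case True
        thus ?thesis
          using le_star_if_perspective[OF fl md mx xp, of e] \<open>sup e x = z\<close>
          by (simp add: inf_commute sup_commute)
      next
        case False
        hence zp: "covers z (sup z p)"
          by (rule covers_sup_if_not_le[OF md \<open>x \<le> z\<close> xp])
        have "sup z p \<le> star e"
          using le_star_if_covers[OF fl zp] assms(6) by (rule order.trans)
        then obtain r where r: "covers e r" "r \<le> sup z p" "\<not> r \<le> z"
          using ex_atom_le_not_le_star[OF fl md \<open>e \<le> z\<close> coversD[OF zp]] by blast
        have "e \<le> r" using coversD[OF r(1)] by (rule less_imp_le)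
        have "z \<le> sup x r"
          unfolding \<open>sup e x = z\<close>[symmetric] using \<open>e \<le> r\<close> by (simp add: le_supI2)
        moreover have "sup x r \<le> sup z p"
          using r(2) \<open>x \<le> z\<close> by (simp add: le_supI1)
        moreover have "sup x r \<noteq> z"
          using r(3) by (metis sup.cobounded2)
        ultimately have "sup x r = sup z p"
          using covers_between[OF zp] by blast
        moreover have "inf x r = inf e x"
        proof (rule order.antisym)
          have "inf z r = e"
            by (rule inf_eq_if_covers_not_le[OF r(1) \<open>e \<le> z\<close> r(3)])
          thus "inf x r \<le> inf e x"
            using \<open>x \<le> z\<close> by (metis inf.cobounded1 inf.cobounded2 inf_mono le_inf_iff order_refl)
          show "inf e x \<le> inf x r"
            using \<open>e \<le> r\<close> by (simp add: le_infI1)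
        qed
        ultimately show ?thesis
          using le_star_if_perspective[OF fl md mx xp, of r] by simp
      qed
    qed
  qed
qed

lemma le_lower_cover_if_skeleton:
  assumes fl: "finite_length TYPE('a::bounded_lattice)" and md: "modular_lattice TYPE('a)"
    and "x \<in> skeleton TYPE('a)" and "covers e z" and "x \<le> z" and "star z \<le> star e"
  shows "x \<le> (e::'a)"
proof (rule ccontr)
  assume "\<not> x \<le> e"
  hence "star x \<le> star (inf e x)"
    using star_le_star_inf_if_covers[OF fl md assms(4,5) _ assms(6)] by blast
  moreover have "inf e x < x"
    using \<open>\<not> x \<le> e\<close> by (simp add: less_le_not_le)
  ultimately show False
    using star_not_le_star_if_skeleton[OF fl md assms(3)] by blast
qed

lemma maximal_atomistic_interval_star:
  assumes fl: "finite_length TYPE('a::bounded_lattice)" and md: "modular_lattice TYPE('a)"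
    and "\<And>e. covers e s \<Longrightarrow> \<not> star s \<le> star e"
  shows "maximal_atomistic_interval s (star (s::'a))"
  unfolding maximal_atomistic_interval_def
proof (intro conjI allI impI)
  show "atomistic_interval s (star s)"
    by (rule atomistic_interval_star[OF fl md])
  fix c d assume cd: "atomistic_interval c d \<and> {s..star s} \<subseteq> {c..d}"
  hence "c \<le> s" "star s \<le> d"
    using le_star[OF fl, of s] by auto
  moreover have "d \<le> star c"
    using cd le_star_if_atomistic_interval[OF fl] by blast
  moreover have "c = s"
  proof (rule ccontr)
    assume "c \<noteq> s"
    then obtain e where "c \<le> e" "covers e s"
      using ex_ge_covers[OF fl] \<open>c \<le> s\<close> by (metis order.not_eq_order_implies_strict)
    hence "star s \<le> star e"
      using \<open>star s \<le> d\<close> \<open>d \<le> star c\<close> star_mono[OF fl md] by (meson order.trans)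
    thus False
      using assms(3) \<open>covers e s\<close> by blast
  qed
  ultimately show "{c..d} = {s..star s}"
    by (simp add: order.antisym)
qed

lemma star_le_star_if_no_skeleton_between:
  assumes fl: "finite_length TYPE('a::bounded_lattice)" and md: "modular_lattice TYPE('a)"
    and "x \<in> skeleton TYPE('a)" and "x \<le> z"
    and no_between: "\<not> (\<exists>s\<in>skeleton TYPE('a). x < s \<and> s \<le> z)"
  shows "star z \<le> star (x::'a)"
proof -
  obtain s where "x \<le> s" "s \<le> z" "star z \<le> star s"
    and min: "\<forall>s'. x \<le> s' \<and> s' \<le> z \<and> star z \<le> star s' \<longrightarrow> \<not> s' < s"
    using finite_length_ex_minimal[OF fl, of z "{s. x \<le> s \<and> s \<le> z \<and> star z \<le> star s}"] assms(4)
    by auto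
  have "maximal_atomistic_interval s (star s)"
  proof (rule maximal_atomistic_interval_star[OF fl md])
    fix e assume es: "covers e s"
    show "\<not> star s \<le> star e"
      using le_lower_cover_if_skeleton[OF fl md assms(3) es \<open>x \<le> s\<close>] min coversD[OF es]
        \<open>s \<le> z\<close> \<open>star z \<le> star s\<close> by (meson less_imp_le order.trans)
  qed
  hence "s \<in> skeleton TYPE('a)"
    unfolding skeleton_def by blast
  hence "s = x"
    using no_between \<open>x \<le> s\<close> \<open>s \<le> z\<close> by (auto simp: less_le)
  thus ?thesis
    using \<open>star z \<le> star s\<close> by simp
qed

theorem lemma6p3:
  fixes x y :: "'a::bounded_lattice"
  assumes "modular_lattice TYPE('a)"
    and "finite_length TYPE('a)"
    and "x \<in> skeleton TYPE('a)" and "y \<in> skeleton TYPE('a)"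
    and "covers_in (skeleton TYPE('a)) x y"
  shows "x < y \<and> y \<le> star x"
proof -
  note md = assms(1) and fl = assms(2)
  have "x < y" and no_between: "\<not> (\<exists>s\<in>skeleton TYPE('a). x < s \<and> s < y)"
    using assms(5) unfolding covers_in_def by auto
  obtain z where "x \<le> z" and zy: "covers z y"
    using ex_ge_covers[OF fl \<open>x < y\<close>] by blast
  have "\<not> (\<exists>s\<in>skeleton TYPE('a). x < s \<and> s \<le> z)"
    using no_between coversD[OF zy] by (meson order.strict_trans1)
  hence "star z \<le> star x"
    by (rule star_le_star_if_no_skeleton_between[OF fl md assms(3) \<open>x \<le> z\<close>])
  moreover have "y \<le> star z"
    by (rule le_star_if_covers[OF fl zy])
  ultimately show ?thesis
    using \<open>x < y\<close> by simp
qed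

end
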